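(* Let $2\le k\le d$, suppose dimension $k$ is just rotating (after some step $N\le i$), and let $a=\lambda x^{(i)}_{k-1}$ and $b=x^{(i)}_k$. Suppose that $\theta_g\le\pi/2$, $\gamma(i)>\pi/2$ and $|a+b|>|a|$. Then $\langle\lambda[a+b],[\lambda b]\rangle\le\pi/2$, entailing $\gamma(i+1)\le\phi(i+1)\le\pi/2$.
   Context: Fix an integer $R\ge2$ and $\theta_g=\pi/R$. Polar rounding on $\mathbb{C}$: for $z=Ae^{i\theta}$, $[z]=[A]e^{i[\theta]}$, where $[A]$ is a fixed real rounding function of the modulus and $[\theta]$ is the multiple of $\theta_g$ closest to $\theta$ (deterministic tie-breaking). Let $\lambda\in\mathbb{C}$ be algebraic with $|\lambda|=1$ and $M$ the $d\times d$ Jordan block with eigenvalue $\lambda$. The orbit is $x^{(0)}\in\mathbb{C}^d$ with rounded entries and $x^{(i+1)}_j=[\lambda x^{(i)}_j+x^{(i)}_{j+1}]$ for $j<d$, $x^{(i+1)}_d=[\lambda x^{(i)}_d]$. Dimension $k$ is just rotating after position $N$ if $x^{(i+1)}_k=[\lambda x^{(i)}_k]$ for all $i\ge N$. For $a,b\in\mathbb{C}$ (as vectors in $\mathbb{R}^2$), $\langle a,b\rangle\in[0,\pi]$ is the smallest angle between them. Define $\phi(i)=\langle\lambda x^{(i)}_{k-1},x^{(i)}_k\rangle$ and $\gamma(i)=\langle\lambda x^{(i)}_{k-1}+x^{(i)}_k,\lambda x^{(i)}_{k-1}\rangle$. *)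

theory Defs
  imports "HOL-Analysis.Analysis" "HOL-Computational_Algebra.Polynomial"
begin

definition theta_g :: "nat \<Rightarrow> real" where
  "theta_g R = pi / real R"

text \<open>Polar rounding [z] = [A] e^{i [theta]} with z = A e^{i theta}, theta = Arg z in (-pi,pi];
  rA is the fixed rounding function of the modulus; [theta] is the multiple of
  theta_g nearest to theta, ties broken deterministically (upwards, via round).\<close>
definition prnd :: "(real \<Rightarrow> real) \<Rightarrow> nat \<Rightarrow> complex \<Rightarrow> complex" where
  "prnd rA R z = complex_of_real (rA (cmod z)) *
      cis (theta_g R * real_of_int (round (Arg z / theta_g R)))"

text \<open>Smallest angle in [0,pi] between a and b viewed as vectors of R^2.
  (If one of them is 0, this gives pi/2 by the convention x / 0 = 0.)\<close>
definition cangle :: "complex \<Rightarrow> complex \<Rightarrow> real" where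
  "cangle a b = arccos (Re (a * cnj b) / (cmod a * cmod b))"

text \<open>Rounded orbit of the d x d Jordan block with eigenvalue lam; coordinates 1..d.\<close>
definition is_orbit ::
  "(real \<Rightarrow> real) \<Rightarrow> nat \<Rightarrow> complex \<Rightarrow> nat \<Rightarrow> (nat \<Rightarrow> nat \<Rightarrow> complex) \<Rightarrow> bool" where
  "is_orbit rA R lam d x \<longleftrightarrow>
     (\<forall>j\<in>{1..d}. \<exists>z. x 0 j = prnd rA R z) \<and>
     (\<forall>i. \<forall>j\<in>{1..<d}. x (Suc i) j = prnd rA R (lam * x i j + x i (Suc j))) \<and>
     (\<forall>i. x (Suc i) d = prnd rA R (lam * x i d))"

definition just_rotating ::
  "(real \<Rightarrow> real) \<Rightarrow> nat \<Rightarrow> complex \<Rightarrow> (nat \<Rightarrow> nat \<Rightarrow> complex) \<Rightarrow> nat \<Rightarrow> nat \<Rightarrow> bool" where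
  "just_rotating rA R lam x k N \<longleftrightarrow>
     (\<forall>i\<ge>N. x (Suc i) k = prnd rA R (lam * x i k))"

definition phi_ang :: "complex \<Rightarrow> (nat \<Rightarrow> nat \<Rightarrow> complex) \<Rightarrow> nat \<Rightarrow> nat \<Rightarrow> real" where
  "phi_ang lam x k i = cangle (lam * x i (k - 1)) (x i k)"

definition gamma_ang :: "complex \<Rightarrow> (nat \<Rightarrow> nat \<Rightarrow> complex) \<Rightarrow> nat \<Rightarrow> nat \<Rightarrow> real" where
  "gamma_ang lam x k i = cangle (lam * x i (k - 1) + x i k) (lam * x i (k - 1))"

end

theory Submission
  imports Defs
begin

(* The point b = x_i^(k) is itself rounded, so b = rho e^(i m theta_g), and polar rounding
   commutes with rotation by the grid angle m theta_g.  Write a + b = w b.  The obtuse angle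
   between a + b and a together with |a + b| > |a| forces |arg w| < pi/4.  Measured from the
   direction of b, [a + b] then has angle [arg w], of size at most pi/2 - theta_g/2, while
   [lam b] has angle [arg lam], within theta_g/2 of arg lam; so lam [a + b] and [lam b] are at
   most pi/2 apart.  Finally, if u and v make an angle of at most pi/2, then the angle between
   u + v and u is at most the angle between u and v. *)

definition round_angle :: "nat \<Rightarrow> real \<Rightarrow> real" where
  "round_angle R t = theta_g R * of_int (round (t / theta_g R))"

lemma prnd_eq_round_angle:
  "prnd rA R z = of_real (rA (cmod z)) * cis (round_angle R (Arg z))"
  by (simp add: prnd_def round_angle_def)

lemma theta_g_pos: "0 < R \<Longrightarrow> 0 < theta_g R"
  by (simp add: theta_g_def)

lemma theta_g_times_R: "0 < R \<Longrightarrow> theta_g R * real R = pi"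
  by (simp add: theta_g_def)

lemma round_angle_add_grid:
  assumes "0 < R"
  shows "round_angle R (t + theta_g R * of_int m) = round_angle R t + theta_g R * of_int m"
proof -
  let ?y = "t / theta_g R"
  have "(t + theta_g R * of_int m) / theta_g R = ?y + of_int m"
    using theta_g_pos[OF assms] by (simp add: field_simps)
  moreover have "round (?y + of_int m) = round ?y + m"
    using of_int_round_gt[of ?y] of_int_round_le[of ?y] by (intro round_unique) auto
  ultimately show ?thesis by (simp add: round_angle_def distrib_left)
qed

lemma abs_round_angle_diff_le:
  assumes "0 < R"
  shows "\<bar>t - round_angle R t\<bar> \<le> theta_g R / 2"
proof -
  let ?\<theta> = "theta_g R"
  have "t - round_angle R t = ?\<theta> * (t / ?\<theta> - of_int (round (t / ?\<theta>)))"
    using theta_g_pos[OF assms] by (simp add: round_angle_def algebra_simps)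
  then have "\<bar>t - round_angle R t\<bar> = ?\<theta> * \<bar>of_int (round (t / ?\<theta>)) - t / ?\<theta>\<bar>"
    using theta_g_pos[OF assms] by (simp add: abs_mult abs_minus_commute)
  also have "\<dots> \<le> ?\<theta> * (1 / 2)"
    using theta_g_pos[OF assms] of_int_round_abs_le by (intro mult_left_mono) auto
  finally show ?thesis by simp
qed

lemma abs_round_angle_le:
  assumes "0 < R" "\<bar>t\<bar> < pi / 4"
  shows "\<bar>round_angle R t\<bar> \<le> pi / 2 - theta_g R / 2"
proof -
  let ?\<theta> = "theta_g R" and ?n = "round (t / theta_g R)"
  have \<theta>: "0 < ?\<theta>" "?\<theta> * real R = pi" using assms(1) theta_g_pos theta_g_times_R by auto
  have "\<bar>t\<bar> < real R / 4 * ?\<theta>" using assms(2) \<theta>(2) by (simp add: mult.commute)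
  then have "\<bar>t / ?\<theta>\<bar> < real R / 4"
    using \<theta>(1) by (simp add: abs_divide pos_divide_less_eq)
  then have "\<bar>of_int ?n\<bar> < real R / 4 + 1 / 2"
    using of_int_round_abs_le[of "t / ?\<theta>"] by linarith
  then have "4 * \<bar>?n\<bar> < int R + 2" by linarith
  then have "2 * \<bar>?n\<bar> + 1 \<le> int R" using assms(1) by presburger
  then have "?\<theta> * (2 * \<bar>of_int ?n\<bar> + 1) \<le> ?\<theta> * real R"
    using \<theta>(1) by (intro mult_left_mono) linarith+
  then show ?thesis using \<theta> by (simp add: round_angle_def abs_mult algebra_simps)
qed

lemma cis_round_angle_cong:
  assumes "0 < R" "cis s = cis t"
  shows "cis (round_angle R s) = cis (round_angle R t)"
proof -
  obtain n :: int where s: "s = t + 2 * pi * n"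
    using assms(2) sin_cos_eq_iff by (metis cis.sel)
  have grid: "2 * pi * n = theta_g R * of_int (2 * int R * n)"
  proof -
    have "theta_g R * of_int (2 * int R * n) = 2 * (theta_g R * real R) * of_int n" by simp
    then show ?thesis using theta_g_times_R[OF assms(1)] by simp
  qed
  have "round_angle R s = round_angle R t + 2 * pi * n"
    by (simp only: s grid round_angle_add_grid[OF assms(1)])
  then show ?thesis by (simp flip: cis_mult)
qed

lemma prnd_mult_cis_grid:
  assumes "0 < R" "z \<noteq> 0"
  shows "prnd rA R (z * cis (theta_g R * of_int m))
    = of_real (rA (cmod z)) * cis (round_angle R (Arg z) + theta_g R * of_int m)"
proof -
  let ?g = "theta_g R * of_int m"
  have "cis (Arg (z * cis ?g)) = cis (Arg z + ?g)"
    using assms(2) by (simp add: cis_Arg sgn_mult flip: cis_mult)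
  then have "cis (round_angle R (Arg (z * cis ?g))) = cis (round_angle R (Arg z) + ?g)"
    using cis_round_angle_cong[OF assms(1)] round_angle_add_grid[OF assms(1)] by metis
  then show ?thesis by (simp add: prnd_eq_round_angle norm_mult)
qed

lemma acute_ratio_le:
  fixes A B C p :: real
  assumes "0 < A" "0 < B" "0 < C" "0 \<le> p" "p \<le> A * B" "C\<^sup>2 = A\<^sup>2 + B\<^sup>2 + 2 * p"
  shows "p / (A * B) \<le> (A\<^sup>2 + p) / (C * A)"
proof -
  have squares: "(p * C)\<^sup>2 \<le> (B * (A\<^sup>2 + p))\<^sup>2"
  proof -
    have "p\<^sup>2 \<le> (A * B)\<^sup>2" using assms by (intro power_mono) auto
    then have "p\<^sup>2 * A\<^sup>2 + p\<^sup>2 * (2 * p) \<le> (A * B)\<^sup>2 * A\<^sup>2 + (A * B)\<^sup>2 * (2 * p)"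
      using assms by (intro add_mono mult_right_mono) auto
    moreover have "(p * C)\<^sup>2 = p\<^sup>2 * (A\<^sup>2 + B\<^sup>2 + 2 * p)"
      using assms(6) by (simp add: power_mult_distrib)
    moreover have "(B * (A\<^sup>2 + p))\<^sup>2 = (A * B)\<^sup>2 * A\<^sup>2 + (A * B)\<^sup>2 * (2 * p) + p\<^sup>2 * B\<^sup>2"
      by (simp add: power2_eq_square algebra_simps)
    ultimately show ?thesis by (simp add: distrib_left)
  qed
  moreover have "0 \<le> B * (A\<^sup>2 + p)" using assms by simp
  ultimately have "p * C \<le> B * (A\<^sup>2 + p)" by (rule power2_le_imp_le)
  then have "p * C / (A * B * C) \<le> B * (A\<^sup>2 + p) / (A * B * C)"
    using assms by (intro divide_right_mono) auto
  then show ?thesis using assms by (simp add: field_simps)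
qed

lemma abs_Re_mult_cnj_div_le_1: "\<bar>Re (u * cnj v) / (cmod u * cmod v)\<bar> \<le> 1"
  using abs_Re_le_cmod[of "u * cnj v"]
  by (cases "cmod u * cmod v = 0") (auto simp: norm_mult abs_divide)

lemma cangle_le_pi_div_2_iff: "cangle u v \<le> pi / 2 \<longleftrightarrow> 0 \<le> Re (u * cnj v)"
proof -
  have "cangle u v \<le> arccos 0 \<longleftrightarrow> 0 \<le> Re (u * cnj v) / (cmod u * cmod v)"
    unfolding cangle_def using abs_Re_mult_cnj_div_le_1 by (intro arccos_le_mono) auto
  also have "\<dots> \<longleftrightarrow> 0 \<le> Re (u * cnj v)"
  proof (cases "u = 0 \<or> v = 0")
    case False
    then have "0 < cmod u * cmod v" by simp
    then show ?thesis by (simp add: zero_le_divide_iff)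
  qed auto
  finally show ?thesis by simp
qed

lemma cangle_add_le_cangle:
  assumes "0 \<le> Re (u * cnj v)"
  shows "cangle (u + v) u \<le> cangle u v"
proof (cases "u = 0 \<or> v = 0")
  case True
  moreover have "cangle u u \<le> pi / 2"
    unfolding cangle_le_pi_div_2_iff by (simp add: complex_mult_cnj)
  ultimately show ?thesis by (auto simp: cangle_def)
next
  case False
  define A B C p where "A = cmod u" and "B = cmod v" and "C = cmod (u + v)" and "p = Re (u * cnj v)"
  have AB: "0 < A" "0 < B" using False by (auto simp: A_def B_def)
  have C2: "C\<^sup>2 = A\<^sup>2 + B\<^sup>2 + 2 * p"
    unfolding A_def B_def C_def p_def cmod_power2 by (simp add: power2_eq_square algebra_simps)
  have "0 < C\<^sup>2" using AB assms by (simp add: C2 p_def add_pos_nonneg)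
  then have C: "0 < C" by (simp add: C_def)
  have "p \<le> A * B"
    using complex_Re_le_cmod[of "u * cnj v"] by (simp add: p_def A_def B_def norm_mult)
  then have "p / (A * B) \<le> (A\<^sup>2 + p) / (C * A)"
    using AB C C2 assms by (intro acute_ratio_le) (auto simp: p_def)
  moreover have "Re ((u + v) * cnj u) = A\<^sup>2 + p"
    unfolding A_def p_def cmod_power2 by (simp add: power2_eq_square algebra_simps)
  ultimately have "Re (u * cnj v) / (cmod u * cmod v) \<le> Re ((u + v) * cnj u) / (cmod (u + v) * cmod u)"
    by (simp add: A_def B_def C_def p_def)
  moreover note abs_Re_mult_cnj_div_le_1[of u v] abs_Re_mult_cnj_div_le_1[of "u + v" u]
  ultimately show ?thesis
    unfolding cangle_def by (intro arccos_le_arccos) linarith+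
qed

lemma abs_Arg_less_pi_div_4:
  assumes "\<bar>Im w\<bar> < Re w"
  shows "\<bar>Arg w\<bar> < pi / 4"
proof -
  have Re: "0 < Re w" using assms by linarith
  then have "\<bar>Im w / Re w\<bar> < 1" using assms by (simp add: abs_divide)
  then have "\<bar>arctan (Im w / Re w)\<bar> < arctan 1"
    by (metis abs_less_iff arctan_less_iff arctan_minus)
  then show ?thesis by (simp add: arg_conv_arctan[OF Re] arctan_one)
qed

lemma abs_Arg_add_div_less_pi_div_4:
  assumes obtuse: "Re ((a + b) * cnj a) < 0" and longer: "cmod a < cmod (a + b)"
  shows "\<bar>Arg ((a + b) / b)\<bar> < pi / 4"
proof -
  have b: "b \<noteq> 0" using obtuse by (auto simp: not_sum_squares_lt_zero)
  define w where "w = (a + b) / b"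
  have ab: "a + b = w * b" "a = (w - 1) * b" using b by (simp_all add: w_def field_simps)
  have "(a + b) * cnj a = (w * cnj (w - 1)) * (b * cnj b)"
    by (simp add: ab(2) algebra_simps)
  also have "b * cnj b = of_real ((cmod b)\<^sup>2)" by (rule complex_norm_square[symmetric])
  finally have "(a + b) * cnj a = (w * cnj (w - 1)) * of_real ((cmod b)\<^sup>2)" .
  then have "Re (w * cnj (w - 1)) < 0"
    using obtuse b by (simp add: mult_less_0_iff)
  then have disc: "(Re w)\<^sup>2 + (Im w)\<^sup>2 < Re w"
    by (simp add: power2_eq_square algebra_simps)
  have "cmod a = cmod (w - 1) * cmod b" unfolding ab(2) by (simp add: norm_mult)
  moreover have "cmod (a + b) = cmod w * cmod b" unfolding ab(1) by (simp add: norm_mult)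
  ultimately have "cmod (w - 1) < cmod w" using longer b by simp
  then have "(cmod (w - 1))\<^sup>2 < (cmod w)\<^sup>2" by (simp add: power_strict_mono)
  then have half: "1 < 2 * Re w" unfolding cmod_power2 by (simp add: power2_eq_square algebra_simps)
  \<comment> \<open>\<open>w\<close> lies in the disc with diameter \<open>[0, 1]\<close> and to the right of \<open>Re w = 1/2\<close>,
    a region inside the sector \<open>\<bar>Arg w\<bar> < pi / 4\<close>.\<close>
  have Re: "0 < Re w" using half by simp
  have "Re w * 1 < Re w * (2 * Re w)" using half Re by (rule mult_strict_left_mono)
  then have "(Im w)\<^sup>2 < (Re w)\<^sup>2" using disc by (simp add: power2_eq_square)
  then have "\<bar>Im w\<bar>\<^sup>2 < (Re w)\<^sup>2" by simp
  then have "\<bar>Im w\<bar> < Re w" using less_imp_le[OF Re] by (rule power2_less_imp_less)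
  then show ?thesis unfolding w_def by (rule abs_Arg_less_pi_div_4)
qed

lemma is_orbit_rounded:
  assumes "is_orbit rA R lam d x" "j \<in> {1..d}"
  shows "\<exists>z. x i j = prnd rA R z"
proof (cases i)
  case 0
  then show ?thesis using assms by (simp add: is_orbit_def)
next
  case (Suc i')
  show ?thesis
  proof (cases "j < d")
    case True
    then show ?thesis using assms Suc by (auto simp: is_orbit_def)
  next
    case False
    then have "j = d" using assms(2) by simp
    then show ?thesis using assms(1) Suc by (auto simp: is_orbit_def)
  qed
qed

lemma prnd_grid_rotation_product:
  fixes m :: int
  assumes R: "0 < R" and lam: "cmod lam = 1" and "0 < \<rho>" "w \<noteq> 0"
  defines "b \<equiv> of_real \<rho> * cis (theta_g R * of_int m)"
  shows "lam * prnd rA R (w * b) * cnj (prnd rA R (lam * b))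
    = of_real (rA (cmod (w * b)) * rA (cmod (lam * b)))
      * cis (Arg lam - round_angle R (Arg lam) + round_angle R (Arg w))"
proof -
  let ?g = "theta_g R * of_int m"
  have "lam \<noteq> 0" using lam by auto
  have P1: "prnd rA R (w * b) = of_real (rA (cmod (w * b))) * cis (round_angle R (Arg w) + ?g)"
    using prnd_mult_cis_grid[where z = "w * of_real \<rho>" and m = m, OF R] assms(3,4)
    by (simp add: b_def mult.assoc norm_mult)
  have P2: "prnd rA R (lam * b) = of_real (rA (cmod (lam * b))) * cis (round_angle R (Arg lam) + ?g)"
    using prnd_mult_cis_grid[where z = "lam * of_real \<rho>" and m = m, OF R] assms(3) \<open>lam \<noteq> 0\<close>
    by (simp add: b_def mult.assoc norm_mult)
  have "cis (Arg lam) = lam" using \<open>lam \<noteq> 0\<close> lam by (simp add: cis_Arg sgn_div_norm)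
  moreover have "cis (Arg lam - round_angle R (Arg lam) + round_angle R (Arg w))
      = cis (Arg lam) * cis (round_angle R (Arg w)) * cis (- round_angle R (Arg lam))"
    by (simp add: cis_mult algebra_simps)
  ultimately have cis_E: "cis (Arg lam - round_angle R (Arg lam) + round_angle R (Arg w))
      = lam * cis (round_angle R (Arg w)) * cis (- round_angle R (Arg lam))"
    by simp
  have "cis (round_angle R (Arg w) + ?g) * cis (- (round_angle R (Arg lam) + ?g))
      = cis (round_angle R (Arg w)) * cis (- round_angle R (Arg lam))"
    by (simp add: cis_mult)
  then show ?thesis unfolding P1 P2 cis_E by (simp add: cis_cnj algebra_simps)
qed

lemma Re_rotated_prnd_nonneg:
  assumes R: "0 < R" and rA: "\<forall>A\<ge>0. 0 \<le> rA A" and lam: "cmod lam = 1"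
    and b: "b = prnd rA R z"
    and obtuse: "Re ((a + b) * cnj a) < 0" and longer: "cmod a < cmod (a + b)"
  shows "0 \<le> Re (lam * prnd rA R (a + b) * cnj (prnd rA R (lam * b)))"
proof -
  define \<rho> m where "\<rho> = rA (cmod z)" and "m = round (Arg z / theta_g R)"
  define w where "w = (a + b) / b"
  define E where "E = Arg lam - round_angle R (Arg lam) + round_angle R (Arg w)"
  have b_grid: "b = of_real \<rho> * cis (theta_g R * of_int m)" using b by (simp add: prnd_def \<rho>_def m_def)
  have "b \<noteq> 0" using obtuse by (auto simp: not_sum_squares_lt_zero)
  then have "0 < \<rho>" using rA b_grid by (auto simp: \<rho>_def order_less_le)
  have "a + b \<noteq> 0" using longer by auto
  then have "w \<noteq> 0" using \<open>b \<noteq> 0\<close> by (simp add: w_def)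
  have "a + b = w * b" using \<open>b \<noteq> 0\<close> by (simp add: w_def field_simps)
  then have "Re (lam * prnd rA R (a + b) * cnj (prnd rA R (lam * b)))
      = rA (cmod (w * b)) * rA (cmod (lam * b)) * cos E"
    using prnd_grid_rotation_product[where m = m and rA = rA, OF R lam \<open>0 < \<rho>\<close> \<open>w \<noteq> 0\<close>]
    by (simp add: b_grid E_def)
  moreover have "\<bar>E\<bar> \<le> pi / 2"
  proof -
    have "\<bar>Arg w\<bar> < pi / 4"
      unfolding w_def using obtuse longer by (rule abs_Arg_add_div_less_pi_div_4)
    then have "\<bar>round_angle R (Arg w)\<bar> \<le> pi / 2 - theta_g R / 2" by (rule abs_round_angle_le[OF R])
    then show ?thesis
      unfolding E_def using abs_round_angle_diff_le[OF R, of "Arg lam"] by linarith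
  qed
  then have "0 \<le> cos E" by (intro cos_ge_zero) linarith+
  ultimately show ?thesis using rA by simp
qed

theorem lemma15:
  fixes rA :: "real \<Rightarrow> real" and R d k N i :: nat and lam :: complex
    and x :: "nat \<Rightarrow> nat \<Rightarrow> complex"
  assumes "R \<ge> 2"
    and rA_nonneg: "\<forall>A\<ge>0. rA A \<ge> 0"
    and "algebraic lam" and "cmod lam = 1"
    and "is_orbit rA R lam d x"
    and "2 \<le> k" and "k \<le> d"
    and "just_rotating rA R lam x k N" and "N \<le> i"
    and "theta_g R \<le> pi / 2"
    and "gamma_ang lam x k i > pi / 2"
    and "cmod (lam * x i (k - 1) + x i k) > cmod (lam * x i (k - 1))"
  shows "cangle (lam * prnd rA R (lam * x i (k - 1) + x i k)) (prnd rA R (lam * x i k)) \<le> pi / 2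
       \<and> gamma_ang lam x k (Suc i) \<le> phi_ang lam x k (Suc i)
       \<and> phi_ang lam x k (Suc i) \<le> pi / 2"
proof -
  define a b where "a = lam * x i (k - 1)" and "b = x i k"
  obtain z where rounded: "b = prnd rA R z"
    using is_orbit_rounded[OF assms(5), of k i] assms(6,7) by (auto simp: b_def)
  have "\<not> cangle (a + b) a \<le> pi / 2"
    using assms(11) by (simp add: gamma_ang_def a_def b_def)
  then have obtuse: "Re ((a + b) * cnj a) < 0" unfolding cangle_le_pi_div_2_iff by simp
  have longer: "cmod a < cmod (a + b)" using assms(12) by (simp add: a_def b_def)
  have acute: "0 \<le> Re (lam * prnd rA R (a + b) * cnj (prnd rA R (lam * b)))"
    using assms(1) by (intro Re_rotated_prnd_nonneg[OF _ rA_nonneg assms(4) rounded obtuse longer]) simp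
  have "k - 1 \<in> {1..<d}" "Suc (k - 1) = k" using assms(6,7) by auto
  then have "x (Suc i) (k - 1) = prnd rA R (a + b)"
    using assms(5) unfolding is_orbit_def a_def b_def by metis
  moreover have "x (Suc i) k = prnd rA R (lam * b)"
    using assms(8,9) by (simp add: just_rotating_def b_def)
  ultimately show ?thesis
    using acute cangle_add_le_cangle cangle_le_pi_div_2_iff
    by (simp add: gamma_ang_def phi_ang_def a_def b_def)
qed

end
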